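(* In the slot formulation of the weighted balls-into-bins process, for every $a$ with $0<a<\lambda/2$ and $Sa\le 1/2$, and every $t\ge0$, $$\mathbb E\left[\Psi(x^s(t+1))-\Psi(x^s(t))\,\middle|\,x^s(t)\right]\le\frac{3a}{2N}\Psi(x^s(t)).$$
   Context: Weighted balls into weighted bins: $n$ bins with positive integer weights $N_1,\dots,N_n$, $N=\sum_iN_i$; $\mathcal D$ on $[n]$ is $(\alpha,\beta)$-biased, i.e. $\frac{N_i}{\alpha N}\le\Pr_{\mathcal D}[i]\le\frac{\beta N_i}{N}$. Ball weights $w(t)$ are i.i.d. from $\mathcal W$ on $[0,\infty)$ with $\mathbb E[\mathcal W]=1$ and $M(z)=\mathbb E[e^{z\mathcal W}]$ finite at $z=\lambda$ for some $\lambda>0$; $S\ge1$ is a constant with $M''(z)\le2S$ for all $|z|<\lambda/2$. Each round two bins are sampled independently from $\mathcal D$ and the ball goes to the sampled bin with smaller value $v_i(t-1)=w_i(t-1)/N_i$. Slot formulation: bin $i$ consists of $N_i$ unit slots; the normalized slot vector $x^s(t)\in\mathbb R^N$ has, for each slot of bin $i$, the entry $v_i(t)-\frac1N\sum_{t'\le t}w(t')$, indexed so that $x^s_1(t)\ge\dots\ge x^s_N(t)$. $\Psi(y)=\sum_je^{-ay_j}$. *)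

theory Defs
  imports "HOL-Probability.Probability"
begin

text \<open>Bins are indexed by 0..n-1; bin i has positive integer weight Nb i.
  A state is the load vector ld :: nat => real (ld i = w_i(t)).
  Since all balls start in empty bins, the total weight thrown so far equals the
  total load sum over i<n of ld i.\<close>

definition total_weight :: "nat \<Rightarrow> (nat \<Rightarrow> nat) \<Rightarrow> nat" where
  "total_weight n Nb = (\<Sum>i<n. Nb i)"

definition bin_value :: "(nat \<Rightarrow> nat) \<Rightarrow> (nat \<Rightarrow> real) \<Rightarrow> nat \<Rightarrow> real" where
  "bin_value Nb ld i = ld i / real (Nb i)"

definition biased :: "nat \<Rightarrow> (nat \<Rightarrow> nat) \<Rightarrow> real \<Rightarrow> real \<Rightarrow> nat pmf \<Rightarrow> bool" where
  "biased n Nb \<alpha> \<beta> D \<longleftrightarrow> set_pmf D \<subseteq> {..<n} \<and>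
     (\<forall>i<n. real (Nb i) / (\<alpha> * real (total_weight n Nb)) \<le> pmf D i \<and>
            pmf D i \<le> \<beta> * real (Nb i) / real (total_weight n Nb))"

definition slot_vector :: "nat \<Rightarrow> (nat \<Rightarrow> nat) \<Rightarrow> (nat \<Rightarrow> real) \<Rightarrow> real list" where
  "slot_vector n Nb ld =
     rev (sort (concat (map (\<lambda>i. replicate (Nb i)
        (bin_value Nb ld i - (\<Sum>k<n. ld k) / real (total_weight n Nb))) [0..<n])))"

definition Psi :: "real \<Rightarrow> real list \<Rightarrow> real" where
  "Psi a y = sum_list (map (\<lambda>yj. exp (- a * yj)) y)"

definition dest :: "(nat \<Rightarrow> nat) \<Rightarrow> (nat \<Rightarrow> real) \<Rightarrow> (nat \<Rightarrow> nat \<Rightarrow> nat) \<Rightarrow> nat \<Rightarrow> nat \<Rightarrow> nat" where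
  "dest Nb ld tb i j =
     (if bin_value Nb ld i < bin_value Nb ld j then i
      else if bin_value Nb ld j < bin_value Nb ld i then j
      else tb i j)"

definition step :: "(nat \<Rightarrow> nat) \<Rightarrow> (nat \<Rightarrow> real) \<Rightarrow> (nat \<Rightarrow> nat \<Rightarrow> nat) \<Rightarrow> nat \<Rightarrow> nat \<Rightarrow> real
     \<Rightarrow> (nat \<Rightarrow> real)" where
  "step Nb ld tb i j \<omega> = (let d = dest Nb ld tb i j in ld(d := ld d + \<omega>))"

definition mgf :: "real measure \<Rightarrow> real \<Rightarrow> real" where
  "mgf Wm z = (\<integral>x. exp (z * x) \<partial>Wm)"

end

theory Submission imports Defs begin

(* Adding a ball of weight w to a bin raises that bin's value and no other, while the
   subtracted average grows by at most w/N. So every slot entry drops by at most w/N and Psi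
   grows at most by the factor exp (a w / N), whichever bins were sampled; averaging over w
   gives E[Psi(t+1)] <= M(a/N) Psi(t). Since exp u <= 1 + u + exp u * u^2/2 for u >= 0,
   M(z) <= 1 + z E[W] + z^2/2 M''(z) <= 1 + z + S z^2 <= 1 + 3z/2 as soon as S z <= 1/2. *)

lemma power_le_scaled_exp:
  fixes x e :: real
  assumes "0 \<le> x" "0 < e"
  shows "x ^ j \<le> (real j / e) ^ j * exp (e * x)"
proof (cases "j = 0")
  case True
  then show ?thesis
    using assms by simp
next
  case False
  have "x = (real j / e) * (e * x / real j)"
    using False assms by (simp add: field_simps)
  also have "\<dots> \<le> (real j / e) * exp (e * x / real j)"
    using exp_ge_add_one_self[of "e * x / real j"] False assms
    by (intro mult_left_mono) (linarith, simp)
  finally have "x ^ j \<le> ((real j / e) * exp (e * x / real j)) ^ j"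
    using assms by (intro power_mono) auto
  also have "\<dots> = (real j / e) ^ j * exp (real j * (e * x / real j))"
    by (simp only: power_mult_distrib exp_of_nat_mult)
  also have "real j * (e * x / real j) = e * x"
    using False by simp
  finally show ?thesis .
qed

lemma integrable_abs_power_exp:
  fixes M :: "real measure"
  assumes sets: "sets M = sets borel" and nonneg: "AE x in M. 0 \<le> x"
    and exp_int: "integrable M (\<lambda>x. exp (lam * x))" and c: "0 \<le> c" "c < lam"
  shows "integrable M (\<lambda>x. \<bar>x\<bar> ^ j * exp (c * \<bar>x\<bar>))"
proof (rule Bochner_Integration.integrable_bound)
  show "integrable M (\<lambda>x. (real j / (lam - c)) ^ j * exp (lam * x))"
    using exp_int by simp
  show "(\<lambda>x. \<bar>x\<bar> ^ j * exp (c * \<bar>x\<bar>)) \<in> borel_measurable M"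
    unfolding measurable_cong_sets[OF sets refl] by measurable
  show "AE x in M. norm (\<bar>x\<bar> ^ j * exp (c * \<bar>x\<bar>)) \<le> norm ((real j / (lam - c)) ^ j * exp (lam * x))"
    using nonneg
  proof eventually_elim
    case (elim x)
    have "x ^ j * exp (c * x) \<le> (real j / (lam - c)) ^ j * exp ((lam - c) * x) * exp (c * x)"
      using power_le_scaled_exp[of x "lam - c" j] elim c by (intro mult_right_mono) auto
    also have "\<dots> = (real j / (lam - c)) ^ j * exp (lam * x)"
      by (simp add: mult.assoc flip: exp_add) (simp add: algebra_simps)
    finally show ?case
      using elim c by simp
  qed
qed

lemma integrable_power_exp:
  fixes M :: "real measure"
  assumes sets: "sets M = sets borel" and nonneg: "AE x in M. 0 \<le> x"
    and exp_int: "integrable M (\<lambda>x. exp (lam * x))" and w: "\<bar>w\<bar> < lam"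
  shows "integrable M (\<lambda>x. x ^ j * exp (w * x))"
proof (rule Bochner_Integration.integrable_bound)
  show "integrable M (\<lambda>x. \<bar>x\<bar> ^ j * exp (\<bar>w\<bar> * \<bar>x\<bar>))"
    using integrable_abs_power_exp[OF sets nonneg exp_int _ w] by simp
  show "(\<lambda>x. x ^ j * exp (w * x)) \<in> borel_measurable M"
    unfolding measurable_cong_sets[OF sets refl] by measurable
  have "w * x \<le> \<bar>w\<bar> * \<bar>x\<bar>" for x
    by (metis abs_ge_self abs_mult)
  then show "AE x in M. norm (x ^ j * exp (w * x)) \<le> norm (\<bar>x\<bar> ^ j * exp (\<bar>w\<bar> * \<bar>x\<bar>))"
    by (intro AE_I2) (simp add: abs_mult power_abs mult_left_mono)
qed

lemma abs_exp_minus_one_minus_le: "\<bar>exp (u::real) - 1 - u\<bar> \<le> exp \<bar>u\<bar> * u\<^sup>2 / 2"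
proof -
  obtain t where t: "\<bar>t\<bar> \<le> \<bar>u\<bar>" "exp u = (\<Sum>m<2. u ^ m / fact m) + exp t / fact 2 * u ^ 2"
    using Maclaurin_exp_le[of u 2] by blast
  then have "\<bar>exp u - 1 - u\<bar> = exp t * u\<^sup>2 / 2"
    by (simp add: numeral_2_eq_2)
  also have "\<dots> \<le> exp \<bar>u\<bar> * u\<^sup>2 / 2"
    using t(1) by (intro divide_right_mono mult_right_mono) auto
  finally show ?thesis .
qed

lemma DERIV_of_quadratic_remainder:
  fixes f :: "real \<Rightarrow> real"
  assumes "0 < d"
    and remainder: "\<And>h. h \<noteq> 0 \<Longrightarrow> \<bar>h\<bar> < d \<Longrightarrow> \<bar>f (z + h) - f z - h * D\<bar> \<le> K * h\<^sup>2"
  shows "(f has_real_derivative D) (at z)"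
proof -
  have "norm ((f (z + h) - f z) / h - D) \<le> \<bar>K\<bar> * \<bar>h\<bar>" if h: "h \<noteq> 0" "\<bar>h\<bar> < d" for h
  proof -
    have "(f (z + h) - f z) / h - D = (f (z + h) - f z - h * D) / h"
      using h by (simp add: field_simps)
    then have "norm ((f (z + h) - f z) / h - D) = \<bar>f (z + h) - f z - h * D\<bar> / \<bar>h\<bar>"
      by simp
    also have "\<dots> \<le> K * h\<^sup>2 / \<bar>h\<bar>"
      using remainder[OF h] by (intro divide_right_mono) auto
    also have "\<dots> = K * \<bar>h\<bar>"
      using h by (simp add: power2_eq_square field_simps)
    also have "\<dots> \<le> \<bar>K\<bar> * \<bar>h\<bar>"
      by (simp add: mult_right_mono)
    finally show ?thesis .
  qed
  then have "\<forall>\<^sub>F h in at 0. norm ((f (z + h) - f z) / h - D) \<le> \<bar>K\<bar> * \<bar>h\<bar>"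
    unfolding eventually_at using \<open>0 < d\<close> by auto
  moreover have "((\<lambda>h. \<bar>K\<bar> * \<bar>h\<bar>) \<longlongrightarrow> 0) (at 0)"
    by (auto intro!: tendsto_eq_intros)
  ultimately have "((\<lambda>h. (f (z + h) - f z) / h - D) \<longlongrightarrow> 0) (at 0)"
    by (rule Lim_null_comparison)
  then have "((\<lambda>h. (f (z + h) - f z) / h) \<longlongrightarrow> D) (at 0)"
    by (rule LIM_zero_cancel)
  then show ?thesis
    by (simp add: DERIV_def)
qed

lemma abs_moment_exp_remainder_le:
  fixes x z h c :: real
  assumes zh: "\<bar>z\<bar> + \<bar>h\<bar> \<le> c"
  shows "\<bar>x ^ k * exp ((z + h) * x) - x ^ k * exp (z * x) - h * (x ^ Suc k * exp (z * x))\<bar>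
    \<le> h\<^sup>2 / 2 * (\<bar>x\<bar> ^ (k + 2) * exp (c * \<bar>x\<bar>))"
proof -
  have "\<bar>x ^ k * exp ((z + h) * x) - x ^ k * exp (z * x) - h * (x ^ Suc k * exp (z * x))\<bar>
      = \<bar>x ^ k * exp (z * x) * (exp (h * x) - 1 - h * x)\<bar>"
    by (simp add: algebra_simps exp_add)
  also have "\<dots> = \<bar>x\<bar> ^ k * exp (z * x) * \<bar>exp (h * x) - 1 - h * x\<bar>"
    by (simp add: abs_mult power_abs)
  also have "\<dots> \<le> \<bar>x\<bar> ^ k * exp (\<bar>z\<bar> * \<bar>x\<bar>) * (exp (\<bar>h\<bar> * \<bar>x\<bar>) * (h * x)\<^sup>2 / 2)"
    using abs_exp_minus_one_minus_le[of "h * x"]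
    by (intro mult_mono mult_left_mono) (auto simp flip: abs_mult)
  also have "\<dots> = h\<^sup>2 / 2 * (\<bar>x\<bar> ^ (k + 2) * exp ((\<bar>z\<bar> + \<bar>h\<bar>) * \<bar>x\<bar>))"
    by (simp add: algebra_simps exp_add power2_eq_square power_add)
  also have "\<dots> \<le> h\<^sup>2 / 2 * (\<bar>x\<bar> ^ (k + 2) * exp (c * \<bar>x\<bar>))"
    using zh by (intro mult_left_mono) (auto intro: mult_right_mono)
  finally show ?thesis .
qed

lemma moment_exp_has_real_derivative:
  fixes M :: "real measure"
  assumes sets: "sets M = sets borel" and nonneg: "AE x in M. 0 \<le> x"
    and exp_int: "integrable M (\<lambda>x. exp (lam * x))" and z: "\<bar>z\<bar> < lam"
  shows "((\<lambda>w. \<integral>x. x ^ k * exp (w * x) \<partial>M) has_real_derivative (\<integral>x. x ^ Suc k * exp (z * x) \<partial>M)) (at z)"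
proof (rule DERIV_of_quadratic_remainder)
  define c where "c = (\<bar>z\<bar> + lam) / 2"
  have c: "0 \<le> c" "c < lam"
    using z by (auto simp: c_def)
  show "0 < (lam - \<bar>z\<bar>) / 2"
    using z by simp
  fix h :: real
  assume "h \<noteq> 0" "\<bar>h\<bar> < (lam - \<bar>z\<bar>) / 2"
  then have zh: "\<bar>z\<bar> + \<bar>h\<bar> \<le> c"
    by (simp add: c_def)
  then have "\<bar>z + h\<bar> < lam" "\<bar>z\<bar> < lam"
    using c abs_triangle_ineq[of z h] by auto
  note int = integrable_power_exp[OF sets nonneg exp_int this(1), of k]
    integrable_power_exp[OF sets nonneg exp_int this(2), of k]
    integrable_power_exp[OF sets nonneg exp_int this(2), of "Suc k"]
  have "\<bar>(\<integral>x. x ^ k * exp ((z + h) * x) \<partial>M) - (\<integral>x. x ^ k * exp (z * x) \<partial>M)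
          - h * (\<integral>x. x ^ Suc k * exp (z * x) \<partial>M)\<bar>
      = \<bar>\<integral>x. x ^ k * exp ((z + h) * x) - x ^ k * exp (z * x) - h * (x ^ Suc k * exp (z * x)) \<partial>M\<bar>"
    using int by (simp add: integral_diff)
  also have "\<dots> \<le> (\<integral>x. h\<^sup>2 / 2 * (\<bar>x\<bar> ^ (k + 2) * exp (c * \<bar>x\<bar>)) \<partial>M)"
  proof (rule integral_abs_bound_integral)
    show "integrable M (\<lambda>x. x ^ k * exp ((z + h) * x) - x ^ k * exp (z * x) - h * (x ^ Suc k * exp (z * x)))"
      using int by auto
    show "integrable M (\<lambda>x. h\<^sup>2 / 2 * (\<bar>x\<bar> ^ (k + 2) * exp (c * \<bar>x\<bar>)))"
      by (intro integrable_mult_right integrable_abs_power_exp[OF sets nonneg exp_int c])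
    show "\<bar>x ^ k * exp ((z + h) * x) - x ^ k * exp (z * x) - h * (x ^ Suc k * exp (z * x))\<bar>
        \<le> h\<^sup>2 / 2 * (\<bar>x\<bar> ^ (k + 2) * exp (c * \<bar>x\<bar>))" for x
      by (rule abs_moment_exp_remainder_le[OF zh])
  qed
  also have "\<dots> = (\<integral>x. \<bar>x\<bar> ^ (k + 2) * exp (c * \<bar>x\<bar>) \<partial>M) / 2 * h\<^sup>2"
    by simp
  finally show "\<bar>(\<integral>x. x ^ k * exp ((z + h) * x) \<partial>M) - (\<integral>x. x ^ k * exp (z * x) \<partial>M)
          - h * (\<integral>x. x ^ Suc k * exp (z * x) \<partial>M)\<bar>
      \<le> (\<integral>x. \<bar>x\<bar> ^ (k + 2) * exp (c * \<bar>x\<bar>) \<partial>M) / 2 * h\<^sup>2" .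
qed

lemma deriv2_mgf:
  fixes M :: "real measure"
  assumes sets: "sets M = sets borel" and nonneg: "AE x in M. 0 \<le> x"
    and exp_int: "integrable M (\<lambda>x. exp (lam * x))" and z: "\<bar>z\<bar> < lam"
  shows "deriv (deriv (mgf M)) z = (\<integral>x. x\<^sup>2 * exp (z * x) \<partial>M)"
proof -
  define U where "U = {w::real. \<bar>w\<bar> < lam}"
  have "open U"
    unfolding U_def by (intro open_Collect_less continuous_intros)
  have "z \<in> U"
    using z by (simp add: U_def)
  have mgf_eq: "mgf M = (\<lambda>w. \<integral>x. x ^ 0 * exp (w * x) \<partial>M)"
    by (simp add: mgf_def fun_eq_iff)
  note derivative = moment_exp_has_real_derivative[OF sets nonneg exp_int]
  have "(\<integral>x. x ^ 1 * exp (w * x) \<partial>M) = deriv (mgf M) w" if "w \<in> U" for w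
    unfolding mgf_eq using derivative[of w 0] that by (simp add: U_def DERIV_imp_deriv)
  from has_field_derivative_transform_within_open[OF derivative[OF z, of 1] \<open>open U\<close> \<open>z \<in> U\<close> this]
  have "(deriv (mgf M) has_real_derivative (\<integral>x. x ^ 2 * exp (z * x) \<partial>M)) (at z)"
    by (simp only: numeral_2_eq_2 One_nat_def)
  then show ?thesis
    by (rule DERIV_imp_deriv)
qed

lemma mgf_le_quadratic:
  fixes M :: "real measure"
  assumes prob: "prob_space M" and sets: "sets M = sets borel" and nonneg: "AE x in M. 0 \<le> x"
    and mean_int: "integrable M (\<lambda>x. x)" and exp_int: "integrable M (\<lambda>x. exp (lam * x))"
    and z: "0 \<le> z" "z < lam"
  shows "mgf M z \<le> 1 + z * (\<integral>x. x \<partial>M) + z\<^sup>2 / 2 * deriv (deriv (mgf M)) z"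
proof -
  interpret prob_space M
    by (rule prob)
  have int: "integrable M (\<lambda>x. x\<^sup>2 * exp (z * x))" "integrable M (\<lambda>x. exp (z * x))"
    using integrable_power_exp[OF sets nonneg exp_int, of z 2] integrable_power_exp[OF sets nonneg exp_int, of z 0] z
    by auto
  have "mgf M z \<le> (\<integral>x. 1 + z * x + z\<^sup>2 / 2 * (x\<^sup>2 * exp (z * x)) \<partial>M)"
    unfolding mgf_def
  proof (rule integral_mono_AE)
    show "AE x in M. exp (z * x) \<le> 1 + z * x + z\<^sup>2 / 2 * (x\<^sup>2 * exp (z * x))"
      using nonneg
    proof eventually_elim
      case (elim x)
      have "exp (z * x) - 1 - z * x \<le> \<bar>exp (z * x) - 1 - z * x\<bar>"
        by simp
      also have "\<dots> \<le> exp \<bar>z * x\<bar> * (z * x)\<^sup>2 / 2"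
        by (rule abs_exp_minus_one_minus_le)
      finally show ?case
        using elim z by (simp add: algebra_simps)
    qed
  next
    show "integrable M (\<lambda>x. 1 + z * x + z\<^sup>2 / 2 * (x\<^sup>2 * exp (z * x)))"
      using int mean_int by simp
  qed (rule int(2))
  also have "\<dots> = 1 + z * (\<integral>x. x \<partial>M) + z\<^sup>2 / 2 * (\<integral>x. x\<^sup>2 * exp (z * x) \<partial>M)"
    using int mean_int by (simp add: prob_space)
  also have "(\<integral>x. x\<^sup>2 * exp (z * x) \<partial>M) = deriv (deriv (mgf M)) z"
    using deriv2_mgf[OF sets nonneg exp_int] z by simp
  finally show ?thesis .
qed

lemma mgf_le_one_plus_three_halves:
  fixes M :: "real measure"
  assumes prob: "prob_space M" and sets: "sets M = sets borel" and nonneg: "AE x in M. 0 \<le> x"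
    and mean_int: "integrable M (\<lambda>x. x)" and mean: "(\<integral>x. x \<partial>M) = 1"
    and exp_int: "integrable M (\<lambda>x. exp (lam * x))"
    and deriv2_le: "deriv (deriv (mgf M)) z \<le> 2 * S"
    and z: "0 \<le> z" "z < lam" "S * z \<le> 1 / 2"
  shows "mgf M z \<le> 1 + 3 / 2 * z"
proof -
  have "mgf M z \<le> 1 + z + z\<^sup>2 / 2 * deriv (deriv (mgf M)) z"
    using mgf_le_quadratic[OF prob sets nonneg mean_int exp_int] z mean by simp
  also have "\<dots> \<le> 1 + z + z\<^sup>2 / 2 * (2 * S)"
    using deriv2_le by (intro add_left_mono mult_left_mono) auto
  also have "\<dots> = 1 + z + z * (S * z)"
    by (simp add: power2_eq_square)
  also have "\<dots> \<le> 1 + 3 / 2 * z"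
    using mult_left_mono[OF z(3) z(1)] by simp
  finally show ?thesis .
qed

lemma integral_le_mgf_mult:
  fixes M :: "real measure"
  assumes sets: "sets M = sets borel" and nonneg: "AE x in M. 0 \<le> x"
    and exp_int: "integrable M (\<lambda>x. exp (lam * x))" and z: "\<bar>z\<bar> < lam"
    and "0 \<le> P" and bound: "\<And>\<omega>. 0 \<le> \<omega> \<Longrightarrow> g \<omega> \<le> exp (z * \<omega>) * P"
  shows "(\<integral>\<omega>. g \<omega> \<partial>M) \<le> mgf M z * P"
proof -
  have "(\<integral>\<omega>. g \<omega> \<partial>M) \<le> (\<integral>\<omega>. exp (z * \<omega>) * P \<partial>M)"
  proof (rule integral_mono_AE')
    show "integrable M (\<lambda>\<omega>. exp (z * \<omega>) * P)"
      using integrable_power_exp[OF sets nonneg exp_int z, of 0] by simp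
  qed (use nonneg bound \<open>0 \<le> P\<close> in auto)
  then show ?thesis
    by (simp add: mgf_def)
qed

lemma pmf_expectation_le_const:
  fixes f :: "'a \<Rightarrow> real"
  assumes "\<And>x. f x \<le> c" "0 \<le> c"
  shows "measure_pmf.expectation p f \<le> c"
  using integral_mono'[of "measure_pmf p" "\<lambda>_. c" f] assms by simp

lemma sum_list_map_rev_sort:
  fixes f :: "'a::linorder \<Rightarrow> 'b::comm_monoid_add"
  shows "sum_list (map f (rev (sort xs))) = sum_list (map f xs)"
  by (simp flip: sum_mset_sum_list)

lemma sum_list_map_concat: "sum_list (map f (concat xss)) = (\<Sum>xs\<leftarrow>xss. sum_list (map f xs))"
  by (induction xss) auto

lemma Psi_slot_vector:
  "Psi a (slot_vector n Nb ld) = (\<Sum>i<n. real (Nb i) *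
      exp (- a * (bin_value Nb ld i - (\<Sum>k<n. ld k) / real (total_weight n Nb))))"
  by (simp add: Psi_def slot_vector_def sum_list_map_rev_sort sum_list_map_concat comp_def
      sum_list_replicate atLeast0LessThan flip: sum_set_upt_conv_sum_list_nat)

lemma Psi_slot_vector_add_load_le:
  assumes a: "0 \<le> a" and \<omega>: "0 \<le> \<omega>"
  shows "Psi a (slot_vector n Nb (ld(d := ld d + \<omega>)))
    \<le> exp (a / real (total_weight n Nb) * \<omega>) * Psi a (slot_vector n Nb ld)"
proof -
  define N where "N = real (total_weight n Nb)"
  define ld' where "ld' = ld(d := ld d + \<omega>)"
  have "(\<Sum>k<n. ld' k) \<le> (\<Sum>k<n. ld k + (if k = d then \<omega> else 0))"
    by (intro sum_mono) (simp add: ld'_def)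
  also have "\<dots> \<le> (\<Sum>k<n. ld k) + \<omega>"
    using \<omega> by (simp add: sum.distrib)
  finally have "(\<Sum>k<n. ld' k) / N \<le> ((\<Sum>k<n. ld k) + \<omega>) / N"
    by (rule divide_right_mono) (simp add: N_def)
  then have mean: "(\<Sum>k<n. ld' k) / N \<le> (\<Sum>k<n. ld k) / N + \<omega> / N"
    by (simp add: add_divide_distrib)
  have "exp (- a * (bin_value Nb ld' i - (\<Sum>k<n. ld' k) / N))
      \<le> exp (a / N * \<omega>) * exp (- a * (bin_value Nb ld i - (\<Sum>k<n. ld k) / N))" for i
  proof -
    have "bin_value Nb ld i \<le> bin_value Nb ld' i"
      unfolding bin_value_def ld'_def using \<omega> by (simp add: divide_right_mono)
    with mean have "bin_value Nb ld i - (\<Sum>k<n. ld k) / N - \<omega> / N \<le> bin_value Nb ld' i - (\<Sum>k<n. ld' k) / N"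
      by linarith
    then have "a * (bin_value Nb ld i - (\<Sum>k<n. ld k) / N - \<omega> / N) \<le> a * (bin_value Nb ld' i - (\<Sum>k<n. ld' k) / N)"
      using a by (rule mult_left_mono)
    then have "- a * (bin_value Nb ld' i - (\<Sum>k<n. ld' k) / N) \<le> a / N * \<omega> + - a * (bin_value Nb ld i - (\<Sum>k<n. ld k) / N)"
      by (simp add: algebra_simps)
    then show ?thesis
      by (simp flip: exp_add)
  qed
  then have "Psi a (slot_vector n Nb ld')
      \<le> (\<Sum>i<n. real (Nb i) * (exp (a / N * \<omega>) * exp (- a * (bin_value Nb ld i - (\<Sum>k<n. ld k) / N))))"
    unfolding Psi_slot_vector N_def[symmetric] by (intro sum_mono mult_left_mono) auto
  also have "\<dots> = exp (a / N * \<omega>) * Psi a (slot_vector n Nb ld)"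
    unfolding Psi_slot_vector N_def[symmetric] sum_distrib_left by (simp add: ac_simps)
  finally show ?thesis
    by (simp add: ld'_def N_def)
qed

lemma total_weight_ge_one:
  assumes "1 \<le> n" "\<And>i. i < n \<Longrightarrow> 0 < Nb i"
  shows "1 \<le> total_weight n Nb"
proof -
  have "Nb 0 \<le> total_weight n Nb"
    unfolding total_weight_def using assms(1) by (intro member_le_sum) auto
  with assms show ?thesis
    by (metis less_le_trans less_one not_le)
qed

theorem mainTheorem10:
  fixes n :: nat and Nb :: "nat \<Rightarrow> nat" and D :: "nat pmf" and \<alpha> \<beta> :: real
    and Wm :: "real measure" and lam S a :: real
    and tb :: "nat \<Rightarrow> nat \<Rightarrow> nat" and ld :: "nat \<Rightarrow> real"
  assumes n_pos: "n \<ge> 1"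
    and Nb_pos: "\<And>i. i < n \<Longrightarrow> Nb i > 0"
    and D_biased: "biased n Nb \<alpha> \<beta> D"
    and W_prob: "prob_space Wm" and W_sets: "sets Wm = sets borel"
    and W_nonneg: "AE x in Wm. x \<ge> 0"
    and W_int: "integrable Wm (\<lambda>x. x)" and W_mean: "(\<integral>x. x \<partial>Wm) = 1"
    and lam_pos: "lam > 0" and mgf_fin: "integrable Wm (\<lambda>x. exp (lam * x))"
    and S_ge: "S \<ge> 1"
    and S_bound: "\<And>z. \<bar>z\<bar> < lam / 2 \<Longrightarrow> deriv (deriv (mgf Wm)) z \<le> 2 * S"
    and tb_ok: "\<And>i j. tb i j \<in> {i, j}"
    and ld_nonneg: "\<And>i. i < n \<Longrightarrow> ld i \<ge> 0"
    and a_pos: "0 < a" and a_lam: "a < lam / 2" and Sa: "S * a \<le> 1 / 2"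
  shows "(\<integral>\<omega>. measure_pmf.expectation D (\<lambda>i. measure_pmf.expectation D (\<lambda>j.
            Psi a (slot_vector n Nb (step Nb ld tb i j \<omega>)))) \<partial>Wm)
          - Psi a (slot_vector n Nb ld)
         \<le> 3 * a / (2 * real (total_weight n Nb)) * Psi a (slot_vector n Nb ld)"
proof -
  define N where "N = real (total_weight n Nb)"
  define z where "z = a / N"
  define P where "P = Psi a (slot_vector n Nb ld)"
  have "1 \<le> N"
    unfolding N_def using total_weight_ge_one[OF n_pos Nb_pos] by simp
  then have z: "0 < z" "z \<le> a"
    using a_pos divide_left_mono[of 1 N a] by (auto simp: z_def)
  have "0 \<le> P"
    unfolding P_def Psi_def by (intro sum_list_nonneg) auto
  \<comment> \<open>The bound holds for every pair of sampled bins, so neither the bias of \<open>D\<close> nor the tie-breaking rule matters.\<close>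
  have "Psi a (slot_vector n Nb (step Nb ld tb i j \<omega>)) \<le> exp (z * \<omega>) * P" if "0 \<le> \<omega>" for i j \<omega>
    unfolding step_def Let_def z_def N_def P_def
    by (rule Psi_slot_vector_add_load_le) (use a_pos that in auto)
  then have "(\<integral>\<omega>. measure_pmf.expectation D (\<lambda>i. measure_pmf.expectation D (\<lambda>j.
            Psi a (slot_vector n Nb (step Nb ld tb i j \<omega>)))) \<partial>Wm) \<le> mgf Wm z * P"
    using z a_lam \<open>0 \<le> P\<close>
    by (intro integral_le_mgf_mult[OF W_sets W_nonneg mgf_fin, of z] pmf_expectation_le_const) auto
  also have "\<dots> \<le> (1 + 3 / 2 * z) * P"
  proof (rule mult_right_mono[OF mgf_le_one_plus_three_halves \<open>0 \<le> P\<close>])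
    show "deriv (deriv (mgf Wm)) z \<le> 2 * S"
      using S_bound z a_lam by simp
    show "S * z \<le> 1 / 2"
      using mult_left_mono[OF z(2), of S] S_ge Sa by linarith
  qed (use W_prob W_sets W_nonneg W_int W_mean mgf_fin z a_lam in auto)
  finally show ?thesis
    by (simp add: z_def N_def P_def algebra_simps)
qed

end
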